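(* Let $X$ be a compact subset of $\mathbb{C}^2$, let $m,n$ be positive integers, and let $\pi:\mathbb{C}^2\to\mathbb{C}^2$ be defined by $\pi(z,w)=(z^m,w^n)$. Suppose $\pi^{-1}(X)=\bigcup_{1\le k\le m,\,1\le l\le n}X_{kl}$, where $X_{11}$ is compact and $$X_{kl}=\Big\{\Big(e^{2\pi i(k-1)/m}z,\; e^{2\pi i(l-1)/n}w\Big): (z,w)\in X_{11}\Big\}\quad (1\le k\le m,\ 1\le l\le n).$$ If $R(\pi^{-1}(X))=C(\pi^{-1}(X))$, then $R(X)=C(X)$.
   Context: For a compact set $K\subset\mathbb{C}^2$: $C(K)$ is the algebra of continuous complex-valued functions on $K$ with the sup norm, and $R(K)$ is the closure in $C(K)$ of the rational functions with poles off $K$. *)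

theory Defs
  imports "HOL-Analysis.Analysis"
begin

definition poly2 :: "(complex \<times> complex \<Rightarrow> complex) \<Rightarrow> bool" where
  "poly2 p \<longleftrightarrow> (\<exists>N::nat. \<exists>c::nat \<Rightarrow> nat \<Rightarrow> complex.
      \<forall>z w. p (z, w) = (\<Sum>i<N. \<Sum>j<N. c i j * z ^ i * w ^ j))"

definition rational_off :: "(complex \<times> complex) set \<Rightarrow> (complex \<times> complex \<Rightarrow> complex) \<Rightarrow> bool" where
  "rational_off K r \<longleftrightarrow> (\<exists>p q. poly2 p \<and> poly2 q \<and> (\<forall>x\<in>K. q x \<noteq> 0) \<and>
      (\<forall>x\<in>K. r x = p x / q x))"

definition R_eq_C :: "(complex \<times> complex) set \<Rightarrow> bool" where
  "R_eq_C K \<longleftrightarrow> (\<forall>f. continuous_on K f \<longrightarrow>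
      (\<forall>e>0. \<exists>r. rational_off K r \<and> (\<forall>x\<in>K. norm (f x - r x) \<le> e)))"

end

(* The group of pairs of roots of unity (zeta, eta), zeta^m = 1 = eta^n, acts on C^2 by
   (z, w) |-> (zeta z, eta w), and pi(z, w) = (z^m, w^n) is onto and constant on orbits. So
   pi^-1(X) is invariant for every X: neither compactness nor the description through X11 is
   needed. Approximate f o pi on pi^-1(X) by p/q and average over the group. The mean of the
   p/q o gamma is P/Q, where Q is the product of the q o gamma and
   P = sum_gamma (p o gamma) * prod_(delta ~= gamma) (q o delta); both are invariant polynomials.
   Averaging the monomial z^a w^b over the group kills it unless m | a and n | b, so invariant
   polynomials are polynomials in (z^m, w^n). Hence the mean is a rational function of pi with
   poles off X, and it is within e of f because each p/q o gamma is within e of f o pi. *)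

theory Submission
  imports Defs
begin

lemma sum_prod_remove_reindex:
  assumes "bij_betw t A A"
  shows "(\<Sum>a\<in>A. f (t a) * (\<Prod>b\<in>A - {a}. g (t b))) = (\<Sum>a\<in>A. f a * (\<Prod>b\<in>A - {a}. g b))"
proof -
  have "(\<Prod>b\<in>A - {a}. g (t b)) = (\<Prod>b\<in>A - {t a}. g b)" if "a \<in> A" for a
    using that assms bij_betw_apply[OF assms]
    by (intro prod.reindex_bij_betw bij_betw_DiffI) auto
  then have "(\<Sum>a\<in>A. f (t a) * (\<Prod>b\<in>A - {a}. g (t b))) = (\<Sum>a\<in>A. f (t a) * (\<Prod>b\<in>A - {t a}. g b))"
    by simp
  also have "\<dots> = (\<Sum>a\<in>A. f a * (\<Prod>b\<in>A - {a}. g b))"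
    by (rule sum.reindex_bij_betw[OF assms])
  finally show ?thesis .
qed

lemma sum_prod_remove_divide_prod:
  fixes g :: "'a \<Rightarrow> 'b::field"
  assumes "finite A" and "\<And>a. a \<in> A \<Longrightarrow> g a \<noteq> 0"
  shows "(\<Sum>a\<in>A. f a * (\<Prod>b\<in>A - {a}. g b)) / (\<Prod>a\<in>A. g a) = (\<Sum>a\<in>A. f a / g a)"
  unfolding sum_divide_distrib
proof (rule sum.cong[OF refl])
  fix a assume "a \<in> A"
  then have "(\<Prod>a\<in>A. g a) = g a * (\<Prod>b\<in>A - {a}. g b)"
    using assms(1) by (rule prod.remove[rotated])
  moreover have "(\<Prod>b\<in>A - {a}. g b) \<noteq> 0"
    using assms by simp
  ultimately show "f a * (\<Prod>b\<in>A - {a}. g b) / (\<Prod>a\<in>A. g a) = f a / g a"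
    by simp
qed

lemma poly2_monomialsI:
  assumes "finite T" and "\<And>z w. p (z, w) = (\<Sum>t\<in>T. c t * z ^ a t * w ^ b t)"
  shows "poly2 p"
proof -
  define N where "N = Suc (Max (a ` T \<union> b ` T))"
  have aN: "a t < N" and bN: "b t < N" if "t \<in> T" for t
    using that assms(1) Max_ge[of "a ` T \<union> b ` T"] by (fastforce simp: N_def less_Suc_eq_le)+
  define C where "C i j = (\<Sum>t\<in>T. if b t = j \<and> a t = i then c t else 0)" for i j
  have "(\<Sum>i<N. \<Sum>j<N. C i j * z ^ i * w ^ j) = p (z, w)" for z w
  proof -
    have "(\<Sum>i<N. \<Sum>j<N. C i j * z ^ i * w ^ j)
        = (\<Sum>t\<in>T. \<Sum>i<N. \<Sum>j<N. if b t = j \<and> a t = i then c t * z ^ a t * w ^ b t else 0)"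
      unfolding C_def sum_distrib_right
      by (subst sum.swap, subst (2) sum.swap) (intro sum.cong refl; auto)
    also have "\<dots> = (\<Sum>t\<in>T. c t * z ^ a t * w ^ b t)"
      using aN bN by (intro sum.cong refl) (simp add: if_if_eq_conj[symmetric])
    finally show ?thesis using assms(2) by simp
  qed
  then show ?thesis unfolding poly2_def by (intro exI[of _ N] exI[of _ C] allI) simp
qed

lemma poly2_monomialsE:
  assumes "poly2 p"
  obtains T :: "(nat \<times> nat) set" and c a b
  where "finite T" and "\<And>z w. p (z, w) = (\<Sum>t\<in>T. c t * z ^ a t * w ^ b t)"
proof -
  obtain N c where "\<And>z w. p (z, w) = (\<Sum>i<N. \<Sum>j<N. c i j * z ^ i * w ^ j)"
    using assms unfolding poly2_def by blast
  then have "p (z, w) = (\<Sum>t\<in>{..<N} \<times> {..<N}. case_prod c t * z ^ fst t * w ^ snd t)" for z w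
    by (simp add: sum.cartesian_product case_prod_beta)
  then show ?thesis by (rule that[rotated]) simp
qed

lemma poly2_const: "poly2 (\<lambda>x. k)"
  by (rule poly2_monomialsI[of "{()}" _ "\<lambda>_. k" "\<lambda>_. 0" "\<lambda>_. 0"]) simp_all

lemma poly2_add:
  assumes "poly2 p" and "poly2 q"
  shows "poly2 (\<lambda>x. p x + q x)"
proof -
  obtain T1 :: "(nat \<times> nat) set" and c1 a1 b1 where T1: "finite T1"
    and p: "\<And>z w. p (z, w) = (\<Sum>t\<in>T1. c1 t * z ^ a1 t * w ^ b1 t)"
    using poly2_monomialsE[OF assms(1)] by metis
  obtain T2 :: "(nat \<times> nat) set" and c2 a2 b2 where T2: "finite T2"
    and q: "\<And>z w. q (z, w) = (\<Sum>t\<in>T2. c2 t * z ^ a2 t * w ^ b2 t)"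
    using poly2_monomialsE[OF assms(2)] by metis
  show ?thesis
    by (rule poly2_monomialsI[of "T1 <+> T2" _ "case_sum c1 c2" "case_sum a1 a2" "case_sum b1 b2"])
      (use T1 T2 in \<open>simp_all add: p q sum.Plus\<close>)
qed

lemma poly2_mult:
  assumes "poly2 p" and "poly2 q"
  shows "poly2 (\<lambda>x. p x * q x)"
proof -
  obtain T1 :: "(nat \<times> nat) set" and c1 a1 b1 where T1: "finite T1"
    and p: "\<And>z w. p (z, w) = (\<Sum>t\<in>T1. c1 t * z ^ a1 t * w ^ b1 t)"
    using poly2_monomialsE[OF assms(1)] by metis
  obtain T2 :: "(nat \<times> nat) set" and c2 a2 b2 where T2: "finite T2"
    and q: "\<And>z w. q (z, w) = (\<Sum>t\<in>T2. c2 t * z ^ a2 t * w ^ b2 t)"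
    using poly2_monomialsE[OF assms(2)] by metis
  show ?thesis
  proof (rule poly2_monomialsI[of "T1 \<times> T2" _ "\<lambda>(t, s). c1 t * c2 s"
        "\<lambda>(t, s). a1 t + a2 s" "\<lambda>(t, s). b1 t + b2 s"])
    show "finite (T1 \<times> T2)" using T1 T2 by simp
  qed (simp add: p q sum_product sum.cartesian_product case_prod_beta power_add algebra_simps)
qed

lemma poly2_sum:
  "finite A \<Longrightarrow> (\<And>i. i \<in> A \<Longrightarrow> poly2 (p i)) \<Longrightarrow> poly2 (\<lambda>x. \<Sum>i\<in>A. p i x)"
  by (induction A rule: finite_induct) (auto intro: poly2_add poly2_const)

lemma poly2_prod:
  "finite A \<Longrightarrow> (\<And>i. i \<in> A \<Longrightarrow> poly2 (p i)) \<Longrightarrow> poly2 (\<lambda>x. \<Prod>i\<in>A. p i x)"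
  by (induction A rule: finite_induct) (auto intro: poly2_mult poly2_const)

definition scale2 :: "complex \<times> complex \<Rightarrow> complex \<times> complex \<Rightarrow> complex \<times> complex" where
  "scale2 \<gamma> x = (fst \<gamma> * fst x, snd \<gamma> * snd x)"

lemma scale2_scale2: "scale2 \<gamma> (scale2 \<gamma>\<^sub>0 x) = scale2 (scale2 \<gamma>\<^sub>0 \<gamma>) x"
  by (simp add: scale2_def mult_ac)

lemma poly2_compose_scale2:
  assumes "poly2 p"
  shows "poly2 (\<lambda>x. p (scale2 \<gamma> x))"
proof -
  obtain T :: "(nat \<times> nat) set" and c a b where T: "finite T"
    and p: "\<And>z w. p (z, w) = (\<Sum>t\<in>T. c t * z ^ a t * w ^ b t)"
    using poly2_monomialsE[OF assms] by metis
  show ?thesis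
    by (rule poly2_monomialsI[OF T, of _ "\<lambda>t. c t * fst \<gamma> ^ a t * snd \<gamma> ^ b t" a b])
      (simp add: scale2_def p algebra_simps)
qed

definition roots_unity2 :: "nat \<Rightarrow> nat \<Rightarrow> (complex \<times> complex) set" where
  "roots_unity2 m n = {\<zeta>. \<zeta> ^ m = 1} \<times> {\<eta>. \<eta> ^ n = 1}"

definition pow_map :: "nat \<Rightarrow> nat \<Rightarrow> complex \<times> complex \<Rightarrow> complex \<times> complex" where
  "pow_map m n = (\<lambda>(z, w). (z ^ m, w ^ n))"

lemma finite_roots_unity2: "m > 0 \<Longrightarrow> n > 0 \<Longrightarrow> finite (roots_unity2 m n)"
  by (simp add: roots_unity2_def finite_roots_unity)

lemma card_roots_unity2: "m > 0 \<Longrightarrow> n > 0 \<Longrightarrow> card (roots_unity2 m n) = m * n"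
  by (simp add: roots_unity2_def card_cartesian_product card_roots_unity_eq)

lemma one_in_roots_unity2: "(1, 1) \<in> roots_unity2 m n"
  by (simp add: roots_unity2_def)

lemma pow_map_scale2: "\<gamma> \<in> roots_unity2 m n \<Longrightarrow> pow_map m n (scale2 \<gamma> x) = pow_map m n x"
  by (auto simp: roots_unity2_def pow_map_def scale2_def case_prod_beta power_mult_distrib)

lemma surj_pow_map:
  assumes "m > 0" and "n > 0"
  shows "surj (pow_map m n)"
proof -
  have "u \<in> range (pow_map m n)" for u
  proof -
    obtain z w where "fst u = z ^ m" and "snd u = w ^ n"
      using exists_complex_root assms by (metis not_gr0)
    then have "u = pow_map m n (z, w)" by (simp add: pow_map_def prod_eq_iff)
    then show ?thesis by blast
  qed
  then show ?thesis by blast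
qed

lemma bij_betw_mult_roots_unity:
  assumes "m > 0" and "\<omega> ^ m = (1::complex)"
  shows "bij_betw (\<lambda>\<zeta>. \<omega> * \<zeta>) {\<zeta>. \<zeta> ^ m = 1} {\<zeta>. \<zeta> ^ m = 1}"
proof (rule bij_betw_byWitness[where f' = "\<lambda>\<zeta>. \<zeta> / \<omega>"])
  have "\<omega> \<noteq> 0" using assms by (auto simp: power_0_left)
  then show "\<forall>\<zeta>\<in>{\<zeta>. \<zeta> ^ m = 1}. \<omega> * \<zeta> / \<omega> = \<zeta>"
    and "\<forall>\<zeta>\<in>{\<zeta>. \<zeta> ^ m = 1}. \<omega> * (\<zeta> / \<omega>) = \<zeta>" by simp_all
qed (use assms in \<open>auto simp: power_mult_distrib power_divide\<close>)

lemma bij_betw_scale2_roots_unity2: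
  assumes "m > 0" and "n > 0" and "\<gamma> \<in> roots_unity2 m n"
  shows "bij_betw (scale2 \<gamma>) (roots_unity2 m n) (roots_unity2 m n)"
proof -
  have "scale2 \<gamma> = map_prod (\<lambda>\<zeta>. fst \<gamma> * \<zeta>) (\<lambda>\<eta>. snd \<gamma> * \<eta>)"
    by (simp add: fun_eq_iff scale2_def map_prod_def case_prod_beta)
  then show ?thesis
    using assms unfolding roots_unity2_def
    by (simp add: mem_Times_iff bij_betw_map_prod bij_betw_mult_roots_unity)
qed

lemma sum_roots_unity_power_eq_0:
  assumes "m > 0" and "\<not> m dvd a"
  shows "(\<Sum>\<zeta> | \<zeta> ^ m = 1. \<zeta> ^ a) = (0::complex)"
proof -
  define \<omega> where "\<omega> = exp (2 * of_real pi * \<i> * of_nat 1 / of_nat m)"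
  have \<omega>_root: "\<omega> ^ m = 1"
    unfolding \<omega>_def using assms(1) by (intro complex_root_unity) simp
  have "\<omega> ^ a = exp (2 * of_real pi * \<i> * of_nat a / of_nat m)"
    unfolding \<omega>_def exp_of_nat_mult[symmetric] by (simp add: algebra_simps)
  then have \<omega>a: "\<omega> ^ a \<noteq> 1"
    using complex_root_unity_eq_1[of m a] assms by simp
  have "(\<Sum>\<zeta> | \<zeta> ^ m = 1. \<zeta> ^ a) = (\<Sum>\<zeta> | \<zeta> ^ m = 1. (\<omega> * \<zeta>) ^ a)"
    by (rule sum.reindex_bij_betw[OF bij_betw_mult_roots_unity[OF assms(1) \<omega>_root], symmetric])
  also have "\<dots> = \<omega> ^ a * (\<Sum>\<zeta> | \<zeta> ^ m = 1. \<zeta> ^ a)"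
    by (simp add: power_mult_distrib sum_distrib_left)
  finally show ?thesis using \<omega>a by (metis mult_cancel_right1)
qed

(* Either m divides a, or the sum vanishes. *)
lemma roots_unity_sum_mult_power:
  fixes z :: complex
  assumes "m > 0"
  shows "(\<Sum>\<zeta> | \<zeta> ^ m = 1. \<zeta> ^ a) * z ^ a = (\<Sum>\<zeta> | \<zeta> ^ m = 1. \<zeta> ^ a) * (z ^ m) ^ (a div m)"
proof (cases "m dvd a")
  case True
  then have "z ^ a = (z ^ m) ^ (a div m)" by (simp add: power_mult[symmetric])
  then show ?thesis by simp
qed (simp add: sum_roots_unity_power_eq_0[OF assms])

lemma poly2_orbit_sum:
  assumes "m > 0" and "n > 0" and "poly2 F"
  obtains G where "poly2 G"
    and "\<And>x. (\<Sum>\<gamma>\<in>roots_unity2 m n. F (scale2 \<gamma> x)) = G (pow_map m n x)"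
proof -
  obtain T :: "(nat \<times> nat) set" and c a b where T: "finite T"
    and F: "\<And>z w. F (z, w) = (\<Sum>t\<in>T. c t * z ^ a t * w ^ b t)"
    using poly2_monomialsE[OF assms(3)] by metis
  define A where "A k = (\<Sum>\<zeta> | \<zeta> ^ m = 1. \<zeta> ^ k :: complex)" for k
  define B where "B k = (\<Sum>\<eta> | \<eta> ^ n = 1. \<eta> ^ k :: complex)" for k
  define G where "G = (\<lambda>(u, v). \<Sum>t\<in>T. c t * (A (a t) * u ^ (a t div m)) * (B (b t) * v ^ (b t div n)))"
  have "poly2 G"
    by (rule poly2_monomialsI[OF T, of G "\<lambda>t. c t * A (a t) * B (b t)" "\<lambda>t. a t div m" "\<lambda>t. b t div n"])
      (simp add: G_def mult_ac)
  moreover have "(\<Sum>\<gamma>\<in>roots_unity2 m n. F (scale2 \<gamma> x)) = G (pow_map m n x)" for x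
  proof -
    obtain z w where x: "x = (z, w)" by fastforce
    have A: "A k * z ^ k = A k * (z ^ m) ^ (k div m)" and B: "B k * w ^ k = B k * (w ^ n) ^ (k div n)" for k
      unfolding A_def B_def by (intro roots_unity_sum_mult_power assms)+
    have "(\<Sum>\<gamma>\<in>roots_unity2 m n. F (scale2 \<gamma> (z, w)))
        = (\<Sum>\<zeta> | \<zeta> ^ m = 1. \<Sum>\<eta> | \<eta> ^ n = 1. \<Sum>t\<in>T. c t * z ^ a t * w ^ b t * (\<zeta> ^ a t * \<eta> ^ b t))"
      unfolding roots_unity2_def sum.cartesian_product'
      by (simp add: scale2_def F power_mult_distrib mult_ac)
    also have "\<dots> = (\<Sum>t\<in>T. \<Sum>\<zeta> | \<zeta> ^ m = 1. \<Sum>\<eta> | \<eta> ^ n = 1. c t * z ^ a t * w ^ b t * (\<zeta> ^ a t * \<eta> ^ b t))"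
      by (subst sum.swap, rule sum.cong[OF refl], rule sum.swap)
    also have "\<dots> = (\<Sum>t\<in>T. c t * z ^ a t * w ^ b t * (A (a t) * B (b t)))"
      unfolding A_def B_def sum_product by (simp only: sum_distrib_left)
    also have "\<dots> = (\<Sum>t\<in>T. c t * (A (a t) * z ^ a t) * (B (b t) * w ^ b t))"
      by (simp add: mult_ac)
    also have "\<dots> = G (pow_map m n (z, w))"
      by (simp add: G_def pow_map_def A B)
    finally show ?thesis unfolding x .
  qed
  ultimately show ?thesis by (rule that)
qed

lemma poly2_invariant_factors_pow_map:
  assumes "m > 0" and "n > 0" and "poly2 F"
    and invariant: "\<And>\<gamma> x. \<gamma> \<in> roots_unity2 m n \<Longrightarrow> F (scale2 \<gamma> x) = F x"
  obtains G where "poly2 G" and "\<And>x. F x = G (pow_map m n x)"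
proof -
  obtain G where G: "poly2 G"
    and orbit: "\<And>x. (\<Sum>\<gamma>\<in>roots_unity2 m n. F (scale2 \<gamma> x)) = G (pow_map m n x)"
    using poly2_orbit_sum[OF assms(1-3)] by metis
  have "poly2 (\<lambda>u. G u / of_nat (m * n))"
    using poly2_mult[OF G poly2_const] by (simp add: divide_inverse)
  moreover have "F x = G (pow_map m n x) / of_nat (m * n)" for x
    using orbit[of x] invariant assms(1,2) by (simp add: card_roots_unity2 field_simps)
  ultimately show ?thesis by (rule that)
qed

lemma poly2_orbit_numerator_denominator:
  assumes "m > 0" and "n > 0" and "poly2 p" and "poly2 q"
  obtains P Q where "poly2 P" and "poly2 Q"
    and "\<And>x. P (pow_map m n x) = (\<Sum>\<gamma>\<in>roots_unity2 m n.
      p (scale2 \<gamma> x) * (\<Prod>\<delta>\<in>roots_unity2 m n - {\<gamma>}. q (scale2 \<delta> x)))"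
    and "\<And>x. Q (pow_map m n x) = (\<Prod>\<gamma>\<in>roots_unity2 m n. q (scale2 \<gamma> x))"
proof -
  let ?\<Gamma> = "roots_unity2 m n"
  have fin: "finite ?\<Gamma>" using finite_roots_unity2[OF assms(1,2)] .
  define Q where "Q x = (\<Prod>\<gamma>\<in>?\<Gamma>. q (scale2 \<gamma> x))" for x
  define P where "P x = (\<Sum>\<gamma>\<in>?\<Gamma>. p (scale2 \<gamma> x) * (\<Prod>\<delta>\<in>?\<Gamma> - {\<gamma>}. q (scale2 \<delta> x)))" for x
  have "poly2 Q"
    unfolding Q_def by (intro poly2_prod fin poly2_compose_scale2 assms(4))
  moreover have "Q (scale2 \<gamma>\<^sub>0 x) = Q x" if "\<gamma>\<^sub>0 \<in> ?\<Gamma>" for \<gamma>\<^sub>0 x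
    unfolding Q_def scale2_scale2
    by (rule prod.reindex_bij_betw[OF bij_betw_scale2_roots_unity2[OF assms(1,2) that]])
  ultimately obtain Q' where Q': "poly2 Q'" "\<And>x. Q x = Q' (pow_map m n x)"
    using poly2_invariant_factors_pow_map[OF assms(1,2)] by blast
  have "poly2 P"
    unfolding P_def
    by (intro poly2_sum poly2_mult poly2_prod fin finite_Diff poly2_compose_scale2 assms(3,4))
  moreover have "P (scale2 \<gamma>\<^sub>0 x) = P x" if "\<gamma>\<^sub>0 \<in> ?\<Gamma>" for \<gamma>\<^sub>0 x
    unfolding P_def scale2_scale2
    by (rule sum_prod_remove_reindex[OF bij_betw_scale2_roots_unity2[OF assms(1,2) that]])
  ultimately obtain P' where P': "poly2 P'" "\<And>x. P x = P' (pow_map m n x)"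
    using poly2_invariant_factors_pow_map[OF assms(1,2)] by blast
  show ?thesis
    by (rule that[OF P'(1) Q'(1)]) (simp_all add: P'(2)[symmetric] Q'(2)[symmetric] P_def Q_def)
qed

lemma rational_off_orbit_mean:
  assumes "m > 0" and "n > 0" and "rational_off (pow_map m n -` X) r"
  obtains s where "rational_off X s"
    and "\<And>y. y \<in> pow_map m n -` X \<Longrightarrow>
      s (pow_map m n y) = (\<Sum>\<gamma>\<in>roots_unity2 m n. r (scale2 \<gamma> y)) / of_nat (m * n)"
proof -
  let ?\<Gamma> = "roots_unity2 m n" and ?Y = "pow_map m n -` X"
  obtain p q where p: "poly2 p" and q: "poly2 q" and q_nz: "\<And>y. y \<in> ?Y \<Longrightarrow> q y \<noteq> 0"
    and r: "\<And>y. y \<in> ?Y \<Longrightarrow> r y = p y / q y"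
    using assms(3) unfolding rational_off_def by blast
  obtain P Q where P: "poly2 P" and Q: "poly2 Q"
    and P_eq: "\<And>x. P (pow_map m n x) = (\<Sum>\<gamma>\<in>?\<Gamma>. p (scale2 \<gamma> x) * (\<Prod>\<delta>\<in>?\<Gamma> - {\<gamma>}. q (scale2 \<delta> x)))"
    and Q_eq: "\<And>x. Q (pow_map m n x) = (\<Prod>\<gamma>\<in>?\<Gamma>. q (scale2 \<gamma> x))"
    using poly2_orbit_numerator_denominator[OF assms(1,2) p q] by blast
  have fin: "finite ?\<Gamma>" using finite_roots_unity2[OF assms(1,2)] .
  have orbit_Y: "scale2 \<gamma> y \<in> ?Y" if "\<gamma> \<in> ?\<Gamma>" "y \<in> ?Y" for \<gamma> y
    using that by (simp add: pow_map_scale2)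
  have Q_nz: "Q (pow_map m n y) \<noteq> 0" if "y \<in> ?Y" for y
    unfolding Q_eq using fin q_nz orbit_Y[OF _ that] by simp
  define s where "s u = P u / (of_nat (m * n) * Q u)" for u
  have "rational_off X s"
    unfolding rational_off_def
  proof (intro exI conjI ballI)
    show "poly2 P" by (fact P)
    show "poly2 (\<lambda>u. of_nat (m * n) * Q u)" by (intro poly2_mult poly2_const Q)
    fix u assume "u \<in> X"
    moreover obtain y where "u = pow_map m n y"
      using surj_pow_map[OF assms(1,2)] by (metis surjD)
    ultimately show "of_nat (m * n) * Q u \<noteq> 0"
      using Q_nz assms(1,2) by auto
  qed (simp add: s_def)
  moreover have "s (pow_map m n y) = (\<Sum>\<gamma>\<in>?\<Gamma>. r (scale2 \<gamma> y)) / of_nat (m * n)" if "y \<in> ?Y" for y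
  proof -
    have "s (pow_map m n y) = P (pow_map m n y) / Q (pow_map m n y) / of_nat (m * n)"
      by (simp add: s_def mult.commute)
    also have "P (pow_map m n y) / Q (pow_map m n y) = (\<Sum>\<gamma>\<in>?\<Gamma>. r (scale2 \<gamma> y))"
      unfolding P_eq Q_eq using fin q_nz orbit_Y[OF _ that] r
      by (simp add: sum_prod_remove_divide_prod)
    finally show ?thesis .
  qed
  ultimately show ?thesis by (rule that)
qed

lemma norm_mean_le:
  fixes g :: "'a \<Rightarrow> 'b::real_normed_field"
  assumes "finite A" and "A \<noteq> {}" and "\<And>a. a \<in> A \<Longrightarrow> norm (g a) \<le> e"
  shows "norm ((\<Sum>a\<in>A. g a) / of_nat (card A)) \<le> e"
proof -
  have "norm (\<Sum>a\<in>A. g a) \<le> of_nat (card A) * e"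
    using sum_norm_le[of A g "\<lambda>_. e"] assms(3) by simp
  moreover have "card A > 0" using assms(1,2) by (simp add: card_gt_0_iff)
  ultimately show ?thesis by (simp add: norm_divide field_simps)
qed

lemma R_eq_C_if_R_eq_C_pow_map_preimage:
  assumes "m > 0" and "n > 0" and "R_eq_C (pow_map m n -` X)"
  shows "R_eq_C X"
  unfolding R_eq_C_def
proof (intro allI impI)
  let ?\<Gamma> = "roots_unity2 m n" and ?Y = "pow_map m n -` X"
  fix f :: "complex \<times> complex \<Rightarrow> complex" and e :: real
  assume f: "continuous_on X f" and "e > 0"
  have "continuous_on ?Y (pow_map m n)"
    unfolding pow_map_def case_prod_beta by (intro continuous_intros)
  then have "continuous_on ?Y (f \<circ> pow_map m n)"
    by (rule continuous_on_compose) (rule continuous_on_subset[OF f], auto)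
  then obtain r where r: "rational_off ?Y r" and approx: "\<And>y. y \<in> ?Y \<Longrightarrow> norm (f (pow_map m n y) - r y) \<le> e"
    using assms(3) \<open>e > 0\<close> unfolding R_eq_C_def by fastforce
  obtain s where s: "rational_off X s"
    and s_mean: "\<And>y. y \<in> ?Y \<Longrightarrow> s (pow_map m n y) = (\<Sum>\<gamma>\<in>?\<Gamma>. r (scale2 \<gamma> y)) / of_nat (m * n)"
    using rational_off_orbit_mean[OF assms(1,2) r] by blast
  have fin: "finite ?\<Gamma>" and ne: "?\<Gamma> \<noteq> {}"
    using finite_roots_unity2[OF assms(1,2)] one_in_roots_unity2 by auto
  have "norm (f u - s u) \<le> e" if "u \<in> X" for u
  proof -
    obtain y where u: "u = pow_map m n y"
      using surj_pow_map[OF assms(1,2)] by (metis surjD)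
    then have y: "y \<in> ?Y" using that by simp
    have "f u = (\<Sum>\<gamma>\<in>?\<Gamma>. f (pow_map m n (scale2 \<gamma> y))) / of_nat (m * n)"
      using assms(1,2) by (simp add: u pow_map_scale2 card_roots_unity2)
    then have "f u - s u = (\<Sum>\<gamma>\<in>?\<Gamma>. f (pow_map m n (scale2 \<gamma> y)) - r (scale2 \<gamma> y)) / of_nat (card ?\<Gamma>)"
      using assms(1,2) by (simp add: u s_mean[OF y] sum_subtractf diff_divide_distrib card_roots_unity2)
    also have "norm \<dots> \<le> e"
      using y by (intro norm_mean_le fin ne approx) (simp add: pow_map_scale2)
    finally show ?thesis .
  qed
  with s show "\<exists>r. rational_off X r \<and> (\<forall>x\<in>X. norm (f x - r x) \<le> e)" by blast
qed

theorem lemma3p3: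
  fixes X X11 :: "(complex \<times> complex) set" and m n :: nat
  assumes "compact X" and "m > 0" and "n > 0" and "compact X11"
    and "(\<lambda>(z, w). (z ^ m, w ^ n)) -` X =
      (\<Union>k\<in>{1..m}. \<Union>l\<in>{1..n}.
        (\<lambda>(z, w). (exp (2 * of_real pi * \<i> * of_nat (k - 1) / of_nat m) * z,
                    exp (2 * of_real pi * \<i> * of_nat (l - 1) / of_nat n) * w)) ` X11)"
    and "R_eq_C ((\<lambda>(z, w). (z ^ m, w ^ n)) -` X)"
  shows "R_eq_C X"
  using R_eq_C_if_R_eq_C_pow_map_preimage[of m n X] assms(2,3,6) by (simp add: pow_map_def)

end
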